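(* Let $u=s_{i_1}\cdots s_{i_l}$ and $v=s_{j_1}\cdots s_{j_m}$ be reduced words for glides in $\hat S_n$ with offsets $k_1$ and $k_2$ respectively, such that $s_{j_1}\cdots s_{j_m}s_{i_1}\cdots s_{i_l}$ is a reduced word. Number the wires of the wiring diagram of $v|u$ as described below and assign real parameters $\alpha_1,\dots,\alpha_n$ to wires $1,\dots,n$. Let $\mathbf z_{-\infty}\in\mathbb R^m$ and $\mathbf w\in\mathbb R^l$ be the weights on the letters of $v$ and $u$ respectively given by the rule: the weight of a crossing equals $\alpha_{\mathrm{up}}-\alpha_{\mathrm{low}}$, where $\mathrm{up}$ and $\mathrm{low}$ are the numbers of its upper and lower wires. Then $F_{v,u}(\mathbf z_{-\infty},\mathbf w)=(\mathbf w,\mathbf z_{-\infty})$. Furthermore, in the resulting weighted word $s_{i_1+k_2}(w_1)\cdots s_{i_l+k_2}(w_l)s_{j_1-k_1}(z_1)\cdots s_{j_m-k_1}(z_m)$ (with the wires carried along), every crossing weight again equals $\alpha_{\mathrm{up}}-\alpha_{\mathrm{low}}$ for its upper and lower wires.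
   Context: $\hat S_n$ is the affine symmetric group with generators $s_0,\dots,s_{n-1}$ (indices mod $n$), relations $s_i^2=1$, $s_is_js_i=s_js_is_j$ if $i-j\equiv\pm1$, $s_is_j=s_js_i$ if $i-j\not\equiv0,\pm1\pmod n$; $\rho$ is the automorphism $s_i\mapsto s_{i+1}$; $\phi:\hat S_n\to S_n$ sends $s_i\mapsto(i\ i+1)$ ($1\le i\le n-1$), $s_0\mapsto(1\ n)$; a glide of offset $k\in\{0,\dots,n-1\}$ is an element $g$ with $\phi(g)(j)\equiv j+k\pmod n$ for all $j$. For glides $u,v$ of offsets $k_1,k_2$ one has $vu=\rho^{k_2}(u)\rho^{-k_1}(v)$, so when $vu$ is reduced the words $s_{j_1}\cdots s_{j_m}s_{i_1}\cdots s_{i_l}$ and $s_{i_1+k_2}\cdots s_{i_l+k_2}s_{j_1-k_1}\cdots s_{j_m-k_1}$ are connected by braid and commutation moves. Write $s_i(a)$ for a letter $s_i$ carrying a weight $a$. Weighted moves: $s_i(a)s_j(b)s_i(c)\mapsto s_j\!\big(\tfrac{bc}{a+c}\big)s_i(a+c)s_j\!\big(\tfrac{ab}{a+c}\big)$ if $i-j\equiv\pm1$, and $s_i(a)s_j(b)\mapsto s_j(b)s_i(a)$ if $i-j\not\equiv0,\pm1\pmod n$. $F_{v,u}(\mathbf z,\mathbf y)=(\mathbf y',\mathbf z')$ is defined by applying such weighted moves to $s_{j_1}(z_1)\cdots s_{j_m}(z_m)s_{i_1}(y_1)\cdots s_{i_l}(y_l)$ to reach $s_{i_1+k_2}(y'_1)\cdots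 s_{i_l+k_2}(y'_l)s_{j_1-k_1}(z'_1)\cdots s_{j_m-k_1}(z'_m)$ (the result is independent of the sequence of moves). Wiring diagrams: a word is drawn left to right on a cylinder with $n$ wires in positions $1,\dots,n$ (mod $n$); a letter $s_i$ is a crossing of the wires in positions $i$ and $i+1$ ($s_0$: positions $n$ and $1$). The upper wire of a crossing $s_i$ is the one passing from position $i+1$ to position $i$ (for $s_0$: from position $1$ to position $n$); the other is the lower wire. In the diagram of $v|u$ (the word $vu$ with a cut between $v$ and $u$), wire number $i$ is the wire occupying position $i$ at the cut. *)

theory Defs
  imports Complex_Main
begin

text \<open>Affine symmetric group, realised concretely as affine permutations of the integers.
  The generator s_i (0 \<le> i < n) acts on int by swapping every x with x mod n = i
  and x + 1 (so s_0 swaps the classes of n and 1).\<close>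

definition gen_act :: "nat \<Rightarrow> nat \<Rightarrow> int \<Rightarrow> int" where
  "gen_act n i x =
     (if x mod int n = int i mod int n then x + 1
      else if x mod int n = (int i + 1) mod int n then x - 1 else x)"

definition word_eval :: "nat \<Rightarrow> nat list \<Rightarrow> int \<Rightarrow> int" where
  "word_eval n ws = foldr (\<lambda>i f. gen_act n i \<circ> f) ws id"

definition is_word :: "nat \<Rightarrow> nat list \<Rightarrow> bool" where
  "is_word n ws \<longleftrightarrow> set ws \<subseteq> {..<n}"

definition reduced :: "nat \<Rightarrow> nat list \<Rightarrow> bool" where
  "reduced n ws \<longleftrightarrow> is_word n ws \<and>
     (\<forall>ws'. is_word n ws' \<and> word_eval n ws' = word_eval n ws \<longrightarrow> length ws \<le> length ws')"

definition glide :: "nat \<Rightarrow> nat list \<Rightarrow> nat \<Rightarrow> bool" where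
  "glide n ws k \<longleftrightarrow> k < n \<and> (\<forall>j::int. word_eval n ws j mod int n = (j + int k) mod int n)"

definition adj :: "nat \<Rightarrow> nat \<Rightarrow> nat \<Rightarrow> bool" where
  "adj n i j \<longleftrightarrow> j = (i + 1) mod n \<or> i = (j + 1) mod n"

inductive wmove :: "nat \<Rightarrow> (nat \<times> real) list \<Rightarrow> (nat \<times> real) list \<Rightarrow> bool" for n where
  braid: "adj n i j \<Longrightarrow> a + c \<noteq> 0 \<Longrightarrow>
    wmove n (xs @ [(i, a), (j, b), (i, c)] @ ys)
            (xs @ [(j, b * c / (a + c)), (i, a + c), (j, a * b / (a + c))] @ ys)"
| comm: "i \<noteq> j \<Longrightarrow> \<not> adj n i j \<Longrightarrow>
    wmove n (xs @ [(i, a), (j, b)] @ ys) (xs @ [(j, b), (i, a)] @ ys)"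

text \<open>Positions are residues 0..<n (residue 0 stands for position n).
  A labelling L maps a position to the number of the wire occupying it.\<close>

definition pos_swap :: "nat \<Rightarrow> nat \<Rightarrow> nat \<Rightarrow> nat" where
  "pos_swap n i p = (if p = i mod n then (i + 1) mod n
                     else if p = (i + 1) mod n then i mod n else p)"

definition step_lab :: "nat \<Rightarrow> (nat \<Rightarrow> nat) \<Rightarrow> nat \<Rightarrow> nat \<Rightarrow> nat" where
  "step_lab n L i = L \<circ> pos_swap n i"

definition cut_lab :: "nat \<Rightarrow> nat \<Rightarrow> nat" where
  "cut_lab n p = (if p = 0 then n else p)"

text \<open>Labelling at the left end of the diagram of v|u (undo the crossings of v).\<close>

definition left_lab :: "nat \<Rightarrow> nat list \<Rightarrow> nat \<Rightarrow> nat" where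
  "left_lab n v = fold (\<lambda>i L. step_lab n L i) (rev v) (cut_lab n)"

text \<open>Every crossing weight equals alpha_up - alpha_low: the upper wire of s_i is the one
  at position i+1 before the crossing, the lower one is the one at position i.\<close>

fun wires_ok :: "nat \<Rightarrow> (nat \<Rightarrow> real) \<Rightarrow> (nat \<Rightarrow> nat) \<Rightarrow> (nat \<times> real) list \<Rightarrow> bool" where
  "wires_ok n \<alpha> L [] = True"
| "wires_ok n \<alpha> L ((i, a) # xs) =
     (a = \<alpha> (L ((i + 1) mod n)) - \<alpha> (L (i mod n)) \<and> wires_ok n \<alpha> (step_lab n L i) xs)"

end

theory Submission
  imports Defs "HOL-Number_Theory.Cong"
begin

text \<open>Weighted moves preserve the rule that every crossing weight is alpha_up - alpha_low:
  under this rule the middle weight of s_i(a) s_j(b) s_i(c) is b = a + c, and then the braid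
  move merely reverses the weights, which is again what the wires prescribe.  As the rule
  determines all weights from the letters, every word reachable by moves with the letters of
  rho^k2(u) rho^-k1(v) is that word weighted by the wires.  These weights are w followed by z,
  because rotating every letter by k rotates all wire positions by k, while a glide of offset k
  itself moves every position by k.\<close>

text \<open>The wire at position p after the crossings ws was at position pos_perm n ws p before them.\<close>

definition pos_perm :: "nat \<Rightarrow> nat list \<Rightarrow> nat \<Rightarrow> nat" where
  "pos_perm n ws = foldr (\<lambda>i f. pos_swap n i \<circ> f) ws id"

lemma pos_perm_Nil [simp]: "pos_perm n [] = id"
  by (simp add: pos_perm_def)

lemma pos_perm_Cons [simp]: "pos_perm n (i # ws) = pos_swap n i \<circ> pos_perm n ws"
  by (simp add: pos_perm_def)

lemma pos_perm_append: "pos_perm n (xs @ ys) = pos_perm n xs \<circ> pos_perm n ys"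
  by (induction xs) (auto simp: o_assoc)

lemma Suc_mod_neq:
  assumes "2 \<le> n" shows "Suc i mod n \<noteq> i mod n"
proof
  assume "Suc i mod n = i mod n"
  then have "n dvd 1" by (simp add: mod_eq_dvd_iff_nat)
  with assms show False by simp
qed

lemma Suc_Suc_mod_neq:
  assumes "3 \<le> n" shows "Suc (Suc i) mod n \<noteq> i mod n"
proof
  assume "Suc (Suc i) mod n = i mod n"
  then have "n dvd 2" by (simp add: mod_eq_dvd_iff_nat)
  with assms show False by (auto dest: dvd_imp_le)
qed

lemma pos_swap_lt: "p < n \<Longrightarrow> pos_swap n i p < n"
  by (simp add: pos_swap_def)

lemma pos_perm_lt: "p < n \<Longrightarrow> pos_perm n ws p < n"
  by (induction ws) (simp_all add: pos_swap_lt)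

lemma pos_swap_pos_swap: "2 \<le> n \<Longrightarrow> pos_swap n i (pos_swap n i p) = p"
  using Suc_mod_neq[of n i] by (auto simp: pos_swap_def)

lemma pos_perm_rev_pos_perm: "2 \<le> n \<Longrightarrow> pos_perm n (rev ws) (pos_perm n ws p) = p"
  by (induction ws arbitrary: p) (auto simp: pos_perm_append pos_swap_pos_swap)

lemma fold_step_lab: "fold (\<lambda>i L. step_lab n L i) ws L = L \<circ> pos_perm n ws"
  by (induction ws arbitrary: L) (auto simp: step_lab_def pos_perm_append o_assoc)

lemma left_lab_comp_pos_perm: "2 \<le> n \<Longrightarrow> left_lab n v \<circ> pos_perm n v = cut_lab n"
  by (simp add: left_lab_def fold_step_lab fun_eq_iff pos_perm_rev_pos_perm)

lemma gen_act_mod: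
  assumes "0 < n"
  shows "gen_act n i y mod int n = int (pos_swap n i (nat (y mod int n)))"
proof -
  define r where "r = nat (y mod int n)"
  have r: "y mod int n = int r" using assms by (simp add: r_def)
  have at_i: "y mod int n = int i mod int n \<longleftrightarrow> r = i mod n"
    and at_Suc_i: "y mod int n = (int i + 1) mod int n \<longleftrightarrow> r = (i + 1) mod n"
    using r by (metis of_nat_eq_iff zmod_int, metis of_nat_1 of_nat_add of_nat_eq_iff zmod_int)
  have "(y + 1) mod int n = int ((i + 1) mod n)" if "r = i mod n"
    using that at_i by (metis mod_add_left_eq of_nat_1 of_nat_add zmod_int)
  moreover have "(y - 1) mod int n = int (i mod n)" if "r = (i + 1) mod n"
    using that at_Suc_i by (metis mod_diff_left_eq add_diff_cancel_right' zmod_int)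
  ultimately show ?thesis
    unfolding gen_act_def at_i at_Suc_i pos_swap_def r_def[symmetric] using r by auto
qed

lemma pos_perm_word_eval:
  assumes "0 < n" "p < n"
  shows "int (pos_perm n ws p) = word_eval n ws (int p) mod int n"
proof (induction ws)
  case (Cons i ws)
  then have "pos_perm n ws p = nat (word_eval n ws (int p) mod int n)"
    by (metis nat_int)
  then show ?case
    using assms by (simp add: word_eval_def gen_act_mod)
qed (simp add: word_eval_def assms(2) flip: zmod_int)

lemma glide_pos_perm:
  assumes "0 < n" "glide n ws k" "p < n"
  shows "pos_perm n ws p = (p + k) mod n"
proof -
  have "int (pos_perm n ws p) = (int p + int k) mod int n"
    using assms by (simp add: pos_perm_word_eval glide_def)
  then show ?thesis by (metis of_nat_add of_nat_eq_iff zmod_int)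
qed

lemma pos_swap_rotate:
  assumes "p < n"
  shows "pos_swap n ((i + k) mod n) ((p + k) mod n) = (pos_swap n i p + k) mod n"
proof -
  have shift_eq: "(x + k) mod n = (y + k) mod n \<longleftrightarrow> x mod n = y mod n" for x y
    using cong_add_rcancel_nat[of x k y n] by (simp add: cong_def)
  have "((i + k) mod n + 1) mod n = (Suc i mod n + k) mod n"
    by (simp add: mod_simps)
  then show ?thesis
    using assms shift_eq[of p i] shift_eq[of p "Suc i"]
    by (auto simp: pos_swap_def mod_simps)
qed

lemma pos_perm_rotate:
  assumes "p < n"
  shows "pos_perm n (map (\<lambda>i. (i + k) mod n) ws) ((p + k) mod n) = (pos_perm n ws p + k) mod n"
  by (induction ws) (simp_all add: assms pos_perm_lt pos_swap_rotate)

lemma rotated_glide_pos_perm: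
  assumes "\<forall>p<n. pos_perm n ws p = (p + k') mod n" "q < n"
  shows "pos_perm n (map (\<lambda>i. (i + k) mod n) ws) q = (q + k') mod n"
proof -
  define p where "p = (q + (n - k mod n)) mod n"
  have "(p + k) mod n = (q + (n - k mod n) + k mod n) mod n"
    by (simp add: p_def mod_simps)
  also have "q + (n - k mod n) + k mod n = q + n"
    using assms(2) mod_less_divisor[of n k] by linarith
  finally have q: "q = (p + k) mod n"
    using assms(2) by simp
  have p: "p < n"
    using assms(2) by (simp add: p_def)
  have "pos_perm n (map (\<lambda>i. (i + k) mod n) ws) q = (pos_perm n ws p + k) mod n"
    unfolding q using p by (rule pos_perm_rotate)
  also have "\<dots> = (p + k + k') mod n"
    using assms(1) p by (simp add: mod_simps ac_simps)
  finally show ?thesis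
    by (simp add: q mod_simps)
qed

lemma wires_ok_append:
  "wires_ok n \<alpha> L (xs @ ys) \<longleftrightarrow>
     wires_ok n \<alpha> L xs \<and> wires_ok n \<alpha> (L \<circ> pos_perm n (map fst xs)) ys"
proof (induction xs arbitrary: L)
  case (Cons x xs)
  then show ?case
    by (cases x) (simp add: step_lab_def comp_def)
qed simp

lemma wires_ok_cong:
  assumes "0 < n" "\<forall>p<n. L p = L' p"
  shows "wires_ok n \<alpha> L xs \<longleftrightarrow> wires_ok n \<alpha> L' xs"
  using assms(2)
proof (induction xs arbitrary: L L')
  case (Cons x xs)
  obtain i a where x: "x = (i, a)"
    by fastforce
  have "\<forall>p<n. (L \<circ> pos_swap n i) p = (L' \<circ> pos_swap n i) p"
    using Cons.prems by (simp add: pos_swap_lt)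
  then show ?case
    using Cons.IH[of "L \<circ> pos_swap n i" "L' \<circ> pos_swap n i"] Cons.prems assms(1)
    by (simp add: x step_lab_def comp_def)
qed simp

lemma wires_ok_rotate:
  assumes "0 < n" "length ws = length us"
  shows "wires_ok n \<alpha> L (zip (map (\<lambda>i. (i + k) mod n) us) ws) \<longleftrightarrow>
    wires_ok n \<alpha> (\<lambda>p. L ((p + k) mod n)) (zip us ws)"
  using assms(2)
proof (induction us arbitrary: ws L)
  case (Cons i us)
  then obtain a ws' where ws: "ws = a # ws'" and len: "length ws' = length us"
    by (cases ws) auto
  have "((i + k) mod n + 1) mod n = (Suc i mod n + k) mod n"
    and "(i + k) mod n mod n = (i mod n + k) mod n"
    by (simp_all add: mod_simps)
  then have weight: "\<alpha> (L (((i + k) mod n + 1) mod n)) - \<alpha> (L ((i + k) mod n mod n)) =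
      \<alpha> (L ((Suc i mod n + k) mod n)) - \<alpha> (L ((i mod n + k) mod n))"
    by (simp only:)
  have "wires_ok n \<alpha> (step_lab n L ((i + k) mod n)) (zip (map (\<lambda>i. (i + k) mod n) us) ws') \<longleftrightarrow>
      wires_ok n \<alpha> (\<lambda>p. step_lab n L ((i + k) mod n) ((p + k) mod n)) (zip us ws')"
    using Cons.IH[OF len] .
  also have "\<dots> \<longleftrightarrow> wires_ok n \<alpha> (step_lab n (\<lambda>p. L ((p + k) mod n)) i) (zip us ws')"
    using assms(1) by (intro wires_ok_cong) (simp_all add: step_lab_def pos_swap_rotate)
  finally show ?case
    using weight by (simp add: ws)
qed simp

text \<open>With wires A, B, C at positions i, i + 1, i + 2, the rule reads a = alpha B - alpha A,
  b = alpha C - alpha A, c = alpha C - alpha B on both sides.\<close>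

lemma braid_Suc_letters:
  assumes "3 \<le> n" "i < n" "j = Suc i mod n"
  shows wires_ok_braid_Suc_iff:
      "wires_ok n \<alpha> L [(i, a), (j, b), (i, c)] \<longleftrightarrow> wires_ok n \<alpha> L [(j, c), (i, b), (j, a)]"
    and wires_ok_braid_Suc_weight: "wires_ok n \<alpha> L [(i, a), (j, b), (i, c)] \<Longrightarrow> b = a + c"
    and pos_perm_braid_Suc: "pos_perm n [i, j, i] = pos_perm n [j, i, j]"
proof -
  define r where "r = Suc j mod n"
  have mods: "i mod n = i" "Suc i mod n = j" "j mod n = j" "Suc j mod n = r"
    using assms(2,3) by (simp_all add: r_def)
  have "j \<noteq> i" "r \<noteq> j" "r \<noteq> i"
    using Suc_mod_neq[of n i] Suc_mod_neq[of n j] Suc_Suc_mod_neq[of n i] assms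
    by (simp_all add: r_def mod_Suc_eq)
  note distinct = this this[symmetric]
  show "wires_ok n \<alpha> L [(i, a), (j, b), (i, c)] \<longleftrightarrow> wires_ok n \<alpha> L [(j, c), (i, b), (j, a)]"
    "wires_ok n \<alpha> L [(i, a), (j, b), (i, c)] \<Longrightarrow> b = a + c"
    by (auto simp: step_lab_def pos_swap_def mods distinct)
  show "pos_perm n [i, j, i] = pos_perm n [j, i, j]"
    by (auto simp: pos_swap_def mods distinct fun_eq_iff)
qed

lemma wires_ok_braid:
  assumes "3 \<le> n" "i < n" "j < n" "adj n i j" "wires_ok n \<alpha> L [(i, a), (j, b), (i, c)]"
  shows "b = a + c \<and> wires_ok n \<alpha> L [(j, c), (i, b), (j, a)]"
  using assms(4)[unfolded adj_def]
proof (elim disjE)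
  assume "j = (i + 1) mod n"
  then show "b = a + c \<and> wires_ok n \<alpha> L [(j, c), (i, b), (j, a)]"
    using wires_ok_braid_Suc_iff[of n i j] wires_ok_braid_Suc_weight[of n i j] assms(1,2,5)
    by simp
next
  assume "i = (j + 1) mod n"
  then show "b = a + c \<and> wires_ok n \<alpha> L [(j, c), (i, b), (j, a)]"
    using wires_ok_braid_Suc_iff[of n j i] wires_ok_braid_Suc_weight[of n j i] assms(1,3,5)
    by auto
qed

lemma pos_perm_braid:
  assumes "3 \<le> n" "i < n" "j < n" "adj n i j"
  shows "pos_perm n [j, i, j] = pos_perm n [i, j, i]"
  using assms pos_perm_braid_Suc[of n i j] pos_perm_braid_Suc[of n j i] by (auto simp: adj_def)

lemma comm_letters:
  assumes "i < n" "j < n" "i \<noteq> j" "\<not> adj n i j"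
  shows wires_ok_comm: "wires_ok n \<alpha> L [(i, a), (j, b)] \<longleftrightarrow> wires_ok n \<alpha> L [(j, b), (i, a)]"
    and pos_perm_comm: "pos_perm n [j, i] = pos_perm n [i, j]"
proof -
  have "Suc i mod n \<noteq> Suc j mod n"
    using cong_add_rcancel_nat[of i 1 j n] assms(1-3) by (simp add: cong_def)
  then have distinct: "i \<noteq> j" "i \<noteq> Suc j mod n" "Suc i mod n \<noteq> j" "Suc i mod n \<noteq> Suc j mod n"
    using assms(3,4) by (auto simp: adj_def)
  show "wires_ok n \<alpha> L [(i, a), (j, b)] \<longleftrightarrow> wires_ok n \<alpha> L [(j, b), (i, a)]"
    using assms(1,2) distinct distinct[symmetric] by (auto simp: step_lab_def pos_swap_def)
  show "pos_perm n [j, i] = pos_perm n [i, j]"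
    using assms(1,2) distinct distinct[symmetric] by (auto simp: pos_swap_def fun_eq_iff)
qed

lemma wires_ok_replace_infix:
  assumes "wires_ok n \<alpha> L (xs @ mid @ ys)"
    and "wires_ok n \<alpha> (L \<circ> pos_perm n (map fst xs)) mid \<Longrightarrow>
      wires_ok n \<alpha> (L \<circ> pos_perm n (map fst xs)) mid'"
    and "pos_perm n (map fst mid') = pos_perm n (map fst mid)"
  shows "wires_ok n \<alpha> L (xs @ mid' @ ys)"
  using assms by (simp add: wires_ok_append pos_perm_append o_assoc)

lemma wmove_letters: "wmove n xs ys \<Longrightarrow> set (map fst ys) = set (map fst xs)"
  by (induction rule: wmove.induct) auto

lemma wmove_wires_ok:
  assumes "wmove n xs ys" "3 \<le> n" "is_word n (map fst xs)" "wires_ok n \<alpha> L xs"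
  shows "wires_ok n \<alpha> L ys"
  using assms(1)
proof cases
  case (braid i j a c pre b suf)
  have letters: "i < n" "j < n"
    using assms(3) by (auto simp: braid is_word_def)
  let ?M = "L \<circ> pos_perm n (map fst pre)"
  have "wires_ok n \<alpha> ?M [(i, a), (j, b), (i, c)]"
    using assms(4) unfolding braid(1) wires_ok_append by blast
  then have b: "b = a + c" and swapped: "wires_ok n \<alpha> ?M [(j, c), (i, b), (j, a)]"
    using wires_ok_braid[OF assms(2) letters braid(3)] by blast+
  have "ys = pre @ [(j, c), (i, b), (j, a)] @ suf"
    using braid(2,4) by (simp add: b)
  moreover note wires_ok_replace_infix[OF assms(4)[unfolded braid(1)] swapped]
  ultimately show ?thesis
    using pos_perm_braid[OF assms(2) letters braid(3)] by simp
next
  case (comm i j pre a b suf)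
  have letters: "i < n" "j < n"
    using assms(3) by (auto simp: comm is_word_def)
  have "pos_perm n (map fst [(j, b), (i, a)]) = pos_perm n (map fst [(i, a), (j, b)])"
    using pos_perm_comm[OF letters comm(3,4)] by simp
  then show ?thesis
    unfolding comm(2)
    using wires_ok_replace_infix[OF assms(4)[unfolded comm(1)]] wires_ok_comm[OF letters comm(3,4)]
    by blast
qed

lemma rtranclp_wmove_wires_ok:
  assumes "(wmove n)\<^sup>*\<^sup>* xs ys" "3 \<le> n" "is_word n (map fst xs)" "wires_ok n \<alpha> L xs"
  shows "wires_ok n \<alpha> L ys"
proof -
  have "is_word n (map fst ys) \<and> wires_ok n \<alpha> L ys"
    using assms(1)
  proof (induction rule: rtranclp_induct)
    case (step ys zs)
    then show ?case
      using wmove_letters[OF step(2)] wmove_wires_ok[OF step(2) assms(2)] by (simp add: is_word_def)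
  qed (use assms(3,4) in simp)
  then show ?thesis ..
qed

lemma wires_ok_eq_if_same_letters:
  "wires_ok n \<alpha> L xs \<Longrightarrow> wires_ok n \<alpha> L ys \<Longrightarrow> map fst xs = map fst ys \<Longrightarrow> xs = ys"
proof (induction xs arbitrary: ys L)
  case (Cons x xs)
  then show ?case
    by (cases x; cases ys) auto
qed simp

lemma wires_ok_glide_exchange:
  assumes "2 \<le> n" "glide n u k1" "glide n v k2" "length z = length v" "length w = length u"
    and "wires_ok n \<alpha> (left_lab n v) (zip (v @ u) (z @ w))"
  shows "wires_ok n \<alpha> (left_lab n v)
    (zip (map (\<lambda>i. (i + k2) mod n) u @ map (\<lambda>j. (j + n - k1) mod n) v) (w @ z))"
proof -
  define L where "L = left_lab n v"
  define u' where "u' = map (\<lambda>i. (i + k2) mod n) u"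
  have n: "0 < n"
    using assms(1) by simp
  have "k1 < n"
    using assms(2) by (simp add: glide_def)
  then have v': "map (\<lambda>j. (j + n - k1) mod n) v = map (\<lambda>j. (j + (n - k1)) mod n) v"
    by simp
  have L_cut: "L \<circ> pos_perm n v = cut_lab n"
    using left_lab_comp_pos_perm[OF assms(1)] by (simp add: L_def)
  have v_ok: "wires_ok n \<alpha> L (zip v z)" and u_ok: "wires_ok n \<alpha> (cut_lab n) (zip u w)"
    using assms(4,6) by (simp_all add: L_cut wires_ok_append flip: L_def)
  have L_rotated: "\<forall>p<n. L ((p + k2) mod n) = cut_lab n p"
    using L_cut glide_pos_perm[OF n assms(3)] by (metis comp_apply)
  have u'_ok: "wires_ok n \<alpha> L (zip u' w)"
    using u_ok wires_ok_cong[OF n L_rotated] by (simp add: u'_def wires_ok_rotate[OF n assms(5)])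
  have "pos_perm n u' ((p + (n - k1)) mod n) = p" if "p < n" for p
  proof -
    have "pos_perm n u' ((p + (n - k1)) mod n) = ((p + (n - k1)) mod n + k1) mod n"
      using rotated_glide_pos_perm[of n u k1] glide_pos_perm[OF n assms(2)] n
      by (simp add: u'_def)
    also have "\<dots> = p"
      using that \<open>k1 < n\<close> by (simp add: mod_simps)
    finally show ?thesis .
  qed
  then have v'_ok: "wires_ok n \<alpha> (L \<circ> pos_perm n u') (zip (map (\<lambda>j. (j + n - k1) mod n) v) z)"
    using v_ok wires_ok_cong[OF n, of "\<lambda>p. (L \<circ> pos_perm n u') ((p + (n - k1)) mod n)" L]
    by (simp add: v' wires_ok_rotate[OF n assms(4)])
  show ?thesis
    using u'_ok v'_ok assms(4,5) by (simp add: wires_ok_append u'_def flip: L_def)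
qed

theorem lemma4p2:
  fixes n k1 k2 :: nat and u v :: "nat list" and \<alpha> :: "nat \<Rightarrow> real" and z w :: "real list"
  assumes "3 \<le> n"
    and "reduced n u" and "glide n u k1"
    and "reduced n v" and "glide n v k2"
    and "reduced n (v @ u)"
    and "length z = length v" and "length w = length u"
    and "wires_ok n \<alpha> (left_lab n v) (zip (v @ u) (z @ w))"
  shows "\<forall>ws'. (wmove n)\<^sup>*\<^sup>* (zip (v @ u) (z @ w)) ws' \<and>
           map fst ws' = map (\<lambda>i. (i + k2) mod n) u @ map (\<lambda>j. (j + n - k1) mod n) v
         \<longrightarrow> map snd ws' = w @ z \<and> wires_ok n \<alpha> (left_lab n v) ws'"
proof (intro allI impI, elim conjE)
  fix ws'
  assume moves: "(wmove n)\<^sup>*\<^sup>* (zip (v @ u) (z @ w)) ws'"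
    and letters': "map fst ws' = map (\<lambda>i. (i + k2) mod n) u @ map (\<lambda>j. (j + n - k1) mod n) v"
  let ?target = "zip (map (\<lambda>i. (i + k2) mod n) u @ map (\<lambda>j. (j + n - k1) mod n) v) (w @ z)"
  have "is_word n (map fst (zip (v @ u) (z @ w)))"
    using assms(6-8) by (simp add: reduced_def)
  then have ws'_ok: "wires_ok n \<alpha> (left_lab n v) ws'"
    using rtranclp_wmove_wires_ok[OF moves assms(1) _ assms(9)] by blast
  have "wires_ok n \<alpha> (left_lab n v) ?target"
    using wires_ok_glide_exchange[OF _ assms(3,5,7-9)] assms(1) by simp
  then have "ws' = ?target"
    using wires_ok_eq_if_same_letters[OF ws'_ok] letters' assms(7,8) by simp
  then show "map snd ws' = w @ z \<and> wires_ok n \<alpha> (left_lab n v) ws'"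
    using ws'_ok assms(7,8) by simp
qed

end
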